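(* Let $X$ be a strictly convex normed plane, let $K_4$ have vertex set $\{v_1,v_2,v_3,v_4\}$, let $e=v_1v_4$, and let $p$ be a placement of $K_4-e$ in 3-cycle general position. Then: (i) every placement $q$ of $K_4-e$ with $\|q_v-q_w\|=\|p_v-p_w\|$ for all edges $vw$ of $K_4-e$ is also in 3-cycle general position; (ii) if $(K_4-e,p)$ is well-positioned, then it is independent.
   Context: A normed plane is a 2-dimensional real normed space. $X$ is strictly convex if $\|tx+(1-t)y\|<1$ for all distinct $x,y$ with $\|x\|=\|y\|=1$ and all $t\in(0,1)$. A placement of $K_4-e$ is in 3-cycle general position if for each of its two triangles $\{v_1,v_2,v_3\}$ and $\{v_2,v_3,v_4\}$ the three image points are affinely independent (not collinear). A nonzero $x\in X$ is smooth if it has exactly one support functional $f\in X^*$ ($\|f\|=\|x\|$, $f(x)=\|x\|^2$), denoted $\varphi(x)$. A placement is well-positioned if $p_v-p_w$ is smooth for every edge $vw$; then $\varphi_{v,w}:=\varphi((p_v-p_w)/\|p_v-p_w\|)$, and the framework is independent if the linear map $X^{V}\to\mathbb{R}^{E}$, $u\mapsto(\varphi_{v,w}(u_v-u_w))_{vw\in E}$, is surjective. *)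

theory Defs
  imports "HOL-Analysis.Analysis"
begin

definition strictly_convex :: "'a::real_normed_vector itself \<Rightarrow> bool" where
  "strictly_convex _ \<longleftrightarrow>
     (\<forall>x y :: 'a. \<forall>t::real. norm x = 1 \<longrightarrow> norm y = 1 \<longrightarrow> x \<noteq> y \<longrightarrow> 0 < t \<longrightarrow> t < 1
        \<longrightarrow> norm (t *\<^sub>R x + (1 - t) *\<^sub>R y) < 1)"

definition support_functional :: "'a::real_normed_vector \<Rightarrow> ('a \<Rightarrow> real) \<Rightarrow> bool" where
  "support_functional x f \<longleftrightarrow> bounded_linear f \<and> onorm f = norm x \<and> f x = (norm x)^2"

definition smooth :: "'a::real_normed_vector \<Rightarrow> bool" where
  "smooth x \<longleftrightarrow> x \<noteq> 0 \<and> (\<exists>!f. support_functional x f)"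

definition supp_fun :: "'a::real_normed_vector \<Rightarrow> ('a \<Rightarrow> real)" where
  "supp_fun x = (THE f. support_functional x f)"

text \<open>The graph K4 - e, with vertices v1..v4 and the edge v1v4 removed.
  Edges are given a fixed orientation (irrelevant for the notions below).\<close>
datatype vtx = v1 | v2 | v3 | v4

definition K4e_edges :: "(vtx \<times> vtx) set" where
  "K4e_edges = {(v1,v2), (v1,v3), (v2,v3), (v2,v4), (v3,v4)}"

definition three_cycle_gp :: "(vtx \<Rightarrow> 'a::real_normed_vector) \<Rightarrow> bool" where
  "three_cycle_gp p \<longleftrightarrow> \<not> collinear {p v1, p v2, p v3} \<and> \<not> collinear {p v2, p v3, p v4}"

definition well_positioned :: "(vtx \<Rightarrow> 'a::real_normed_vector) \<Rightarrow> bool" where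
  "well_positioned p \<longleftrightarrow> (\<forall>(v,w)\<in>K4e_edges. smooth (p v - p w))"

definition edge_fun :: "(vtx \<Rightarrow> 'a::real_normed_vector) \<Rightarrow> vtx \<Rightarrow> vtx \<Rightarrow> ('a \<Rightarrow> real)" where
  "edge_fun p v w = supp_fun ((1 / norm (p v - p w)) *\<^sub>R (p v - p w))"

text \<open>Independence: the rigidity map u \<mapsto> (phi_vw(u_v - u_w))_{vw in E} is surjective onto R^E.\<close>
definition independent_fw :: "(vtx \<Rightarrow> 'a::real_normed_vector) \<Rightarrow> bool" where
  "independent_fw p \<longleftrightarrow>
     (\<forall>b :: vtx \<times> vtx \<Rightarrow> real. \<exists>u :: vtx \<Rightarrow> 'a.
        \<forall>(v,w)\<in>K4e_edges. edge_fun p v w (u v - u w) = b (v,w))"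

end

theory Submission
  imports Defs
begin

text \<open>In a strictly convex space the triangle inequality is strict for non-collinear triples,
  while some ordering of a collinear triple satisfies it with equality; so the side lengths of a
  triangle decide whether it is degenerate, which gives (i).
  For (ii): a support functional of a unit vector attains the value 1 at no other point of the
  unit sphere, so for non-parallel smooth x, y the normalized support functionals satisfy
  |phi_x (y / |y|)| < 1 and z \<mapsto> (phi_x z, phi_y z) is onto the plane. Put u(v2) = 0 and
  choose u(v3) for the edge v2v3; then v1 and v4 each lie on two edges spanning a
  non-degenerate triangle, and u(v1), u(v4) are solved for separately.\<close>

lemma strictly_convex_norm_add_eq_imp_parallel:
  fixes a b :: "'a::real_normed_vector"
  assumes sc: "strictly_convex TYPE('a)" and a: "a \<noteq> 0" and b: "b \<noteq> 0"
    and eq: "norm (a + b) = norm a + norm b"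
  shows "\<exists>k. b = k *\<^sub>R a"
proof (cases "(1 / norm a) *\<^sub>R a = (1 / norm b) *\<^sub>R b")
  case True
  have "b = norm b *\<^sub>R ((1 / norm b) *\<^sub>R b)"
    using b by simp
  also have "\<dots> = (norm b / norm a) *\<^sub>R a"
    by (simp only: True[symmetric]) simp
  finally show ?thesis ..
next
  case False
  define t where "t = norm a / (norm a + norm b)"
  have pos: "norm a > 0" "norm b > 0"
    using a b by auto
  then have t: "0 < t" "t < 1"
    unfolding t_def by (simp_all only: divide_pos_pos add_pos_pos divide_less_eq_1_pos)
  have "t *\<^sub>R ((1 / norm a) *\<^sub>R a) + (1 - t) *\<^sub>R ((1 / norm b) *\<^sub>R b)
      = (1 / (norm a + norm b)) *\<^sub>R (a + b)"
    using add_pos_pos[OF pos] by (simp add: t_def field_simps scaleR_add_right)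
  moreover have "norm ((1 / (norm a + norm b)) *\<^sub>R (a + b)) = 1"
    using add_pos_pos[OF pos] eq by simp
  moreover have "norm (t *\<^sub>R ((1 / norm a) *\<^sub>R a) + (1 - t) *\<^sub>R ((1 / norm b) *\<^sub>R b)) < 1"
    using sc[unfolded strictly_convex_def, rule_format, OF _ _ False t] a b by simp
  ultimately show ?thesis
    by (metis less_irrefl)
qed

lemma strictly_convex_norm_triangle_less:
  fixes a b c :: "'a::real_normed_vector"
  assumes sc: "strictly_convex TYPE('a)" and nc: "\<not> collinear {a, b, c}"
  shows "norm (a - c) < norm (a - b) + norm (b - c)"
proof -
  have "norm (a - c) \<noteq> norm (a - b) + norm (b - c)"
  proof
    assume "norm (a - c) = norm (a - b) + norm (b - c)"
    then have "norm ((a - b) + (b - c)) = norm (a - b) + norm (b - c)"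
      by simp
    moreover have "a - b \<noteq> 0" "b - c \<noteq> 0"
      using nc by auto
    ultimately obtain k where "b - c = k *\<^sub>R (a - b)"
      using strictly_convex_norm_add_eq_imp_parallel[OF sc] by blast
    then have "c - b = (- k) *\<^sub>R (a - b)"
      by (metis minus_diff_eq scaleR_minus_left)
    then have "collinear {0, a - b, c - b}"
      unfolding collinear_lemma by blast
    with nc show False
      by (simp add: collinear_3)
  qed
  then show ?thesis
    using norm_triangle_ineq[of "a - b" "b - c"] by simp
qed

lemma collinear_norm_triangle_eq_cases:
  fixes a b c :: "'a::real_normed_vector"
  assumes "collinear {a, b, c}"
  shows "norm (a - c) = norm (a - b) + norm (b - c)
       \<or> norm (a - b) = norm (a - c) + norm (c - b)
       \<or> norm (b - c) = norm (b - a) + norm (a - c)"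
proof -
  obtain u where u: "\<forall>x\<in>{a, b, c}. \<forall>y\<in>{a, b, c}. \<exists>c. x - y = c *\<^sub>R u"
    using assms unfolding collinear_def by blast
  obtain s r where s: "a - b = s *\<^sub>R u" and r: "c - b = r *\<^sub>R u"
    using u by blast
  have "a - c = (a - b) - (c - b)" "b - c = - (c - b)" "b - a = - (a - b)"
    by simp_all
  then have "a - c = (s - r) *\<^sub>R u" "b - c = (- r) *\<^sub>R u" "b - a = (- s) *\<^sub>R u"
    unfolding s r by (simp_all add: scaleR_diff_left)
  moreover have "\<bar>s - r\<bar> = \<bar>s\<bar> + \<bar>- r\<bar> \<or> \<bar>s\<bar> = \<bar>s - r\<bar> + \<bar>r\<bar>
      \<or> \<bar>- r\<bar> = \<bar>- s\<bar> + \<bar>s - r\<bar>"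
    by linarith
  ultimately show ?thesis
    unfolding s r by (elim disjE) (simp_all add: distrib_right)
qed

lemma strictly_convex_congruent_not_collinear:
  fixes a b c a' b' c' :: "'a::real_normed_vector"
  assumes sc: "strictly_convex TYPE('a)" and nc: "\<not> collinear {a, b, c}"
    and "norm (a' - b') = norm (a - b)" "norm (a' - c') = norm (a - c)"
    "norm (b' - c') = norm (b - c)"
  shows "\<not> collinear {a', b', c'}"
proof
  assume "collinear {a', b', c'}"
  moreover have "norm (a - c) < norm (a - b) + norm (b - c)"
    using strictly_convex_norm_triangle_less[OF sc nc] .
  moreover have "norm (a - b) < norm (a - c) + norm (c - b)"
    using strictly_convex_norm_triangle_less[OF sc, of a c b] nc by (simp add: insert_commute)
  moreover have "norm (b - c) < norm (b - a) + norm (a - c)"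
    using strictly_convex_norm_triangle_less[OF sc, of b a c] nc by (simp add: insert_commute)
  moreover have "norm (c' - b') = norm (c - b)" "norm (b' - a') = norm (b - a)"
    using assms(3,5) by (simp_all add: norm_minus_commute)
  ultimately show False
    using collinear_norm_triangle_eq_cases[of a' b' c'] assms(3-5) by linarith
qed

lemma support_functional_scaleR:
  fixes x :: "'a::real_normed_vector"
  assumes c: "0 < c" and f: "support_functional x f"
  shows "support_functional (c *\<^sub>R x) (\<lambda>y. c * f y)"
proof -
  have bl: "bounded_linear f" and on: "onorm f = norm x" and fx: "f x = (norm x)\<^sup>2"
    using f by (simp_all add: support_functional_def)
  have "bounded_linear (\<lambda>y. c * f y)"
    using bounded_linear_mult_right bl by (rule bounded_linear_compose)
  moreover have "onorm (\<lambda>y. c * f y) = norm (c *\<^sub>R x)"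
    using onorm_scaleR[OF bl, of c] on c by simp
  moreover have "c * f (c *\<^sub>R x) = (norm (c *\<^sub>R x))\<^sup>2"
    using linear_scale[OF bounded_linear.linear[OF bl]] fx c by (simp add: power2_eq_square)
  ultimately show ?thesis
    by (simp add: support_functional_def)
qed

lemma smooth_scaleR:
  fixes x :: "'a::real_normed_vector"
  assumes c: "0 < c" and sm: "smooth x"
  shows "smooth (c *\<^sub>R x)"
proof -
  obtain f where f: "support_functional x f" and uniq: "\<And>g. support_functional x g \<Longrightarrow> g = f"
    using sm unfolding smooth_def by blast
  have "g = (\<lambda>y. c * f y)" if g: "support_functional (c *\<^sub>R x) g" for g
  proof
    fix y
    have "support_functional x (\<lambda>y. (1 / c) * g y)"
      using support_functional_scaleR[OF _ g, of "1 / c"] c by simp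
    then have "(\<lambda>y. (1 / c) * g y) = f"
      by (rule uniq)
    then have "(1 / c) * g y = f y"
      by (rule fun_cong)
    then show "g y = c * f y"
      using c by (simp add: field_simps)
  qed
  moreover have "c *\<^sub>R x \<noteq> 0"
    using sm c by (simp add: smooth_def)
  ultimately show ?thesis
    using support_functional_scaleR[OF c f] unfolding smooth_def by blast
qed

lemma smooth_support_functional_supp_fun:
  "smooth x \<Longrightarrow> support_functional x (supp_fun x)"
  unfolding smooth_def supp_fun_def by (elim conjE theI')

lemma strictly_convex_support_functional_inj:
  fixes u w :: "'a::real_normed_vector"
  assumes sc: "strictly_convex TYPE('a)" and u: "norm u = 1" and w: "norm w = 1"
    and Fu: "support_functional u F" and Fw: "support_functional w F"
  shows "u = w"
proof (rule ccontr)
  assume "u \<noteq> w"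
  let ?m = "(1 / 2) *\<^sub>R u + (1 - 1 / 2) *\<^sub>R w"
  have bl: "bounded_linear F" and on: "onorm F = 1" and "F u = 1" "F w = 1"
    using Fu Fw u w by (simp_all add: support_functional_def)
  then have "F ?m = 1"
    using linear_add[OF bounded_linear.linear[OF bl]] linear_scale[OF bounded_linear.linear[OF bl]]
    by simp
  moreover have "norm (F ?m) \<le> norm ?m"
    using onorm[OF bl, of ?m] on by simp
  moreover have "norm ?m < 1"
    using sc[unfolded strictly_convex_def, rule_format, OF u w \<open>u \<noteq> w\<close>, of "1 / 2"] by simp
  ultimately show False
    by simp
qed

lemma strictly_convex_support_functionals_surj:
  fixes x y :: "'a::real_normed_vector" and a b :: real
  assumes sc: "strictly_convex TYPE('a)" and x: "norm x = 1" and y: "norm y = 1"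
    and "x \<noteq> y" "x \<noteq> - y"
    and F: "support_functional x F" and G: "support_functional y G"
  shows "\<exists>z. F z = a \<and> G z = b"
proof -
  have Fl: "linear F" and Fx: "F x = 1"
    using F x by (simp_all add: support_functional_def bounded_linear.linear)
  have Gl: "linear G" and Gy: "G y = 1"
    using G y by (simp_all add: support_functional_def bounded_linear.linear)
  have "\<bar>F y\<bar> \<le> 1" "\<bar>G x\<bar> \<le> 1"
    using onorm[of F y] onorm[of G x] F G x y by (simp_all add: support_functional_def)
  moreover have "\<bar>F y\<bar> \<noteq> 1"
  proof
    assume "\<bar>F y\<bar> = 1"
    then consider "F y = 1" | "F (- y) = 1"
      using linear_neg[OF Fl, of y] by linarith
    then show False
    proof cases
      case 1
      then have "support_functional y F"
        using F x y by (simp add: support_functional_def)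
      then show False
        using strictly_convex_support_functional_inj[OF sc x y F] \<open>x \<noteq> y\<close> by blast
    next
      case 2
      then have "support_functional (- y) F"
        using F x y by (simp add: support_functional_def)
      then show False
        using strictly_convex_support_functional_inj[OF sc x _ F] y \<open>x \<noteq> - y\<close> by simp
    qed
  qed
  ultimately have "\<bar>F y * G x\<bar> < 1"
    unfolding abs_mult using mult_left_le[of "\<bar>G x\<bar>" "\<bar>F y\<bar>"] by linarith
  then have D: "1 - F y * G x \<noteq> 0"
    by auto
  \<comment> \<open>Cramer's rule for the system F z = a, G z = b on the span of x and y\<close>
  define z where "z = ((a - b * F y) / (1 - F y * G x)) *\<^sub>R x
    + ((b - a * G x) / (1 - F y * G x)) *\<^sub>R y"
  have "F z = ((a - b * F y) + (b - a * G x) * F y) / (1 - F y * G x)"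
    by (simp add: z_def linear_add[OF Fl] linear_scale[OF Fl] Fx add_divide_distrib)
  also have "(a - b * F y) + (b - a * G x) * F y = a * (1 - F y * G x)"
    by (simp add: algebra_simps)
  finally have "F z = a"
    using D by simp
  have "G z = ((a - b * F y) * G x + (b - a * G x)) / (1 - F y * G x)"
    by (simp add: z_def linear_add[OF Gl] linear_scale[OF Gl] Gy add_divide_distrib)
  also have "(a - b * F y) * G x + (b - a * G x) = b * (1 - F y * G x)"
    by (simp add: algebra_simps)
  finally have "G z = b"
    using D by simp
  with \<open>F z = a\<close> show ?thesis
    by blast
qed

abbreviation unit_supp_fun :: "'a::real_normed_vector \<Rightarrow> 'a \<Rightarrow> real" where
  "unit_supp_fun x \<equiv> supp_fun ((1 / norm x) *\<^sub>R x)"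

lemma support_functional_unit_supp_fun:
  "smooth x \<Longrightarrow> support_functional ((1 / norm x) *\<^sub>R x) (unit_supp_fun x)"
  by (intro smooth_support_functional_supp_fun smooth_scaleR) (simp_all add: smooth_def)

lemma unit_supp_fun_surj:
  assumes "smooth x"
  shows "\<exists>z. unit_supp_fun x z = c"
proof
  have "x \<noteq> 0"
    using assms by (simp add: smooth_def)
  with support_functional_unit_supp_fun[OF assms]
  have "linear (unit_supp_fun x)" "unit_supp_fun x ((1 / norm x) *\<^sub>R x) = 1"
    by (simp_all add: support_functional_def bounded_linear.linear)
  then show "unit_supp_fun x (c *\<^sub>R ((1 / norm x) *\<^sub>R x)) = c"
    by (simp only: linear_scale) simp
qed

lemma unit_supp_fun_pair_surj:
  fixes x y :: "'a::real_normed_vector"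
  assumes sc: "strictly_convex TYPE('a)" and sx: "smooth x" and sy: "smooth y"
    and nc: "\<not> collinear {0, x, y}"
  shows "\<exists>z. unit_supp_fun x z = a \<and> unit_supp_fun y z = b"
proof -
  have x: "x \<noteq> 0" and y: "y \<noteq> 0"
    using sx sy by (simp_all add: smooth_def)
  have "(1 / norm x) *\<^sub>R x \<noteq> s *\<^sub>R ((1 / norm y) *\<^sub>R y)" if "s \<noteq> 0" for s
  proof
    assume "(1 / norm x) *\<^sub>R x = s *\<^sub>R ((1 / norm y) *\<^sub>R y)"
    then have "(norm y / s) *\<^sub>R ((1 / norm x) *\<^sub>R x) = y"
      using that y by simp
    then have "collinear {0, x, y}"
      unfolding collinear_lemma by (metis scaleR_scaleR)
    with nc show False ..
  qed
  from this[of 1] this[of "- 1"] show ?thesis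
    using strictly_convex_support_functionals_surj[OF sc _ _ _ _
        support_functional_unit_supp_fun[OF sx] support_functional_unit_supp_fun[OF sy]] x y
    by simp
qed

lemma collinear_3_diffs: "collinear {a, b, c} \<longleftrightarrow> collinear {0, a - b, a - c}"
proof -
  have "collinear {a, b, c} \<longleftrightarrow> collinear {0, b - a, c - a}"
    using collinear_3[of b a c] by (simp add: NO_MATCH_def insert_commute)
  also have "\<dots> \<longleftrightarrow> collinear {0, a - b, a - c}"
    using collinear_scaleR_iff[of "- 1" "b - a" "- 1" "c - a"] by simp
  finally show ?thesis .
qed

lemma K4e_congruent_three_cycle_gp:
  fixes p q :: "vtx \<Rightarrow> 'a::real_normed_vector"
  assumes sc: "strictly_convex TYPE('a)" and gp: "three_cycle_gp p"
    and cong: "\<forall>(v, w)\<in>K4e_edges. norm (q v - q w) = norm (p v - p w)"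
  shows "three_cycle_gp q"
proof -
  have "norm (q v1 - q v2) = norm (p v1 - p v2)" "norm (q v1 - q v3) = norm (p v1 - p v3)"
    "norm (q v2 - q v3) = norm (p v2 - p v3)" "norm (q v2 - q v4) = norm (p v2 - p v4)"
    "norm (q v3 - q v4) = norm (p v3 - p v4)"
    using cong by (simp_all add: K4e_edges_def)
  then show ?thesis
    using gp strictly_convex_congruent_not_collinear[OF sc] unfolding three_cycle_gp_def by blast
qed

lemma K4e_independent:
  fixes p :: "vtx \<Rightarrow> 'a::real_normed_vector"
  assumes sc: "strictly_convex TYPE('a)" and gp: "three_cycle_gp p" and wp: "well_positioned p"
  shows "independent_fw p"
  unfolding independent_fw_def
proof
  fix b :: "vtx \<times> vtx \<Rightarrow> real"
  have sm: "smooth (p v1 - p v2)" "smooth (p v1 - p v3)" "smooth (p v2 - p v3)"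
     "smooth (p v2 - p v4)" "smooth (p v3 - p v4)"
    using wp by (auto simp: well_positioned_def K4e_edges_def)
  have nc1: "\<not> collinear {0, p v1 - p v2, p v1 - p v3}"
    using gp by (simp add: three_cycle_gp_def collinear_3_diffs[symmetric])
  have nc4: "\<not> collinear {0, p v2 - p v4, p v3 - p v4}"
    using gp collinear_3[of "p v2" "p v4" "p v3"]
    by (simp add: three_cycle_gp_def NO_MATCH_def insert_commute)
  let ?F = "edge_fun p"
  have lin: "linear (?F v w)" if "smooth (p v - p w)" for v w
    using support_functional_unit_supp_fun[OF that]
    by (simp add: edge_fun_def support_functional_def bounded_linear.linear)
  obtain u3 where u3: "?F v2 v3 u3 = - b (v2, v3)"
    using unit_supp_fun_surj[OF sm(3)] unfolding edge_fun_def by blast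
  obtain u1 where u1: "?F v1 v2 u1 = b (v1, v2)" "?F v1 v3 u1 = b (v1, v3) + ?F v1 v3 u3"
    using unit_supp_fun_pair_surj[OF sc sm(1,2) nc1] unfolding edge_fun_def by blast
  obtain u4 where u4: "?F v2 v4 u4 = - b (v2, v4)" "?F v3 v4 u4 = ?F v3 v4 u3 - b (v3, v4)"
    using unit_supp_fun_pair_surj[OF sc sm(4,5) nc4] unfolding edge_fun_def by blast
  define u where "u = (\<lambda>v. case v of v1 \<Rightarrow> u1 | v2 \<Rightarrow> 0 | v3 \<Rightarrow> u3 | v4 \<Rightarrow> u4)"
  have "\<forall>(v, w)\<in>K4e_edges. ?F v w (u v - u w) = b (v, w)"
    using u1 u3 u4 linear_diff[OF lin[OF sm(2)]] linear_neg[OF lin[OF sm(3)]]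
      linear_neg[OF lin[OF sm(4)]] linear_diff[OF lin[OF sm(5)]]
    by (simp add: u_def K4e_edges_def)
  then show "\<exists>u. \<forall>(v, w)\<in>K4e_edges. ?F v w (u v - u w) = b (v, w)"
    by blast
qed

theorem mainTheorem18:
  fixes p :: "vtx \<Rightarrow> 'a::real_normed_vector"
  assumes "dim (UNIV :: 'a set) = 2"
    and "strictly_convex TYPE('a)"
    and "three_cycle_gp p"
  shows "(\<forall>q :: vtx \<Rightarrow> 'a. (\<forall>(v,w)\<in>K4e_edges. norm (q v - q w) = norm (p v - p w))
            \<longrightarrow> three_cycle_gp q)
       \<and> (well_positioned p \<longrightarrow> independent_fw p)"
  using K4e_congruent_three_cycle_gp[OF assms(2,3)] K4e_independent[OF assms(2,3)] by blast

end
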